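(* Let $1<p\le 2$, let $k\ge 0$ be an integer, and let $f:V(G_k)\to L_p$ be any map. Let $\{s,t\}=V(G_0)$ and for $1\le i\le k$ let $A_i$ denote the set of level $i$ anti-edges. Then $$\|f(s)-f(t)\|_p^2+(p-1)\sum_{i=1}^k\sum_{\{x,y\}\in A_i}\|f(x)-f(y)\|_p^2\le \sum_{(x,y)\in E(G_k)}\|f(x)-f(y)\|_p^2.$$
   Context: The diamond graphs $\{G_k\}_{k\ge 0}$ are defined recursively: $G_0$ consists of a single edge of length $1$ between two vertices $s,t$. For $i\ge 1$, $G_i$ is obtained from $G_{i-1}$ by replacing every edge $(u,v)$ of $G_{i-1}$ by a quadrilateral $u,a,v,b$ (with new vertices $a,b$) whose four edges $(u,a),(a,v),(v,b),(b,u)$ have length $2^{-i}$; the edge $(u,v)$ is called an edge of level $i-1$, and the pair $\{a,b\}$ is called the level $i$ anti-edge corresponding to $(u,v)$. Thus $V(G_{i-1})\subseteq V(G_i)$ and all anti-edges of levels $1,\dots,k$ are pairs of vertices of $G_k$. $E(G_k)$ is the edge set of $G_k$. $L_p$ denotes the Lebesgue space $L_p$ with norm $\|\cdot\|_p$. *)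

theory Defs
  imports "HOL-Analysis.Analysis"
begin

(* Vertices of diamond graphs: S, T are the vertices of G_0; Mid b u v is one of the two
   new vertices (b = True gives a, b = False gives b) created when edge (u,v) is replaced
   by a quadrilateral. *)
datatype dvert = S | T | Mid bool dvert dvert

fun diamond_edges :: "nat \<Rightarrow> (dvert \<times> dvert) set" where
  "diamond_edges 0 = {(S, T)}"
| "diamond_edges (Suc i) =
     (\<Union>(u, v) \<in> diamond_edges i.
        {(u, Mid True u v), (Mid True u v, v), (u, Mid False u v), (Mid False u v, v)})"

definition diamond_vertices :: "nat \<Rightarrow> dvert set" where
  "diamond_vertices k = fst ` diamond_edges k \<union> snd ` diamond_edges k"

(* Level i anti-edges (i >= 1): the pair {a,b} created from an edge (u,v) of level i-1,
   represented by the ordered pair (a,b). *)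
definition anti_edges :: "nat \<Rightarrow> (dvert \<times> dvert) set" where
  "anti_edges i = (\<lambda>(u, v). (Mid True u v, Mid False u v)) ` diamond_edges (i - 1)"

definition in_Lp :: "'m measure \<Rightarrow> real \<Rightarrow> ('m \<Rightarrow> real) \<Rightarrow> bool" where
  "in_Lp M p g \<longleftrightarrow> g \<in> borel_measurable M \<and> integrable M (\<lambda>x. \<bar>g x\<bar> powr p)"

definition Lp_norm :: "'m measure \<Rightarrow> real \<Rightarrow> ('m \<Rightarrow> real) \<Rightarrow> real" where
  "Lp_norm M p g = (\<integral>x. \<bar>g x\<bar> powr p \<partial>M) powr (1 / p)"

end

theory Submission
  imports Defs
begin

(* For 1 < p <= 2 the space L_p satisfies
     ||x||^2 + (p - 1) ||y||^2 <= (||x + y||^2 + ||x - y||^2) / 2.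
   Pointwise this is the two-point inequality (a^2 + (p - 1) b^2)^(p/2) <= (|a + b|^p + |a - b|^p) / 2,
   a calculus exercise once normalised to |b| <= |a| = 1; it integrates to the norm inequality
   because the Minkowski inequality reverses in L_(p/2), p/2 <= 1.
   For a quadrilateral u, a, v, b take x = u - v and y = a - b: since x + y = (u - b) + (a - v) and
   x - y = (u - a) + (b - v), this gives ||u - v||^2 + (p - 1) ||a - b||^2 <= the sum of the four
   squared sides. Summed over the edges of G_i, it bounds the edge sum of G_i plus (p - 1) times the
   level i + 1 anti-edge sum by the edge sum of G_(i+1), and induction on k yields the theorem. *)

section \<open>Inequalities for real powers\<close>

lemma powr_concave:
  fixes r :: real
  assumes "0 < r" "r \<le> 1"
  shows "concave_on {0<..} (\<lambda>x. x powr r)"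
proof (rule f''_le0_imp_concave[where f' = "\<lambda>x. r * x powr (r - 1)"
      and f'' = "\<lambda>x. r * ((r - 1) * x powr (r - 1 - 1))"])
  fix x :: real assume "x \<in> {0<..}"
  then show "((\<lambda>x. x powr r) has_real_derivative r * x powr (r - 1)) (at x)"
    and "((\<lambda>x. r * x powr (r - 1)) has_real_derivative r * ((r - 1) * x powr (r - 1 - 1))) (at x)"
    by (auto intro!: derivative_eq_intros)
  show "r * ((r - 1) * x powr (r - 1 - 1)) \<le> 0"
    using assms by (intro mult_nonneg_nonpos mult_nonpos_nonneg) auto
qed simp

lemma mult_powr_le_powr_mult:
  fixes c w r :: real
  assumes "0 < r" "r \<le> 1" "0 \<le> c" "c \<le> 1" "0 \<le> w"
  shows "c * w powr r \<le> (c * w) powr r"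
proof -
  have "c \<le> c powr r"
    using powr_mono'[of r 1 c] assms by simp
  then show ?thesis
    using assms by (simp add: powr_mult mult_right_mono)
qed

lemma powr_concave_combination:
  fixes r u v l :: real
  assumes r: "0 < r" "r \<le> 1" and uv: "0 \<le> u" "0 \<le> v" and l: "0 \<le> l" "l \<le> 1"
  shows "l * u powr r + (1 - l) * v powr r \<le> (l * u + (1 - l) * v) powr r"
proof (cases "u = 0 \<or> v = 0")
  case True
  then show ?thesis
    using mult_powr_le_powr_mult[OF r _ _ uv(1), of l] mult_powr_le_powr_mult[OF r _ _ uv(2), of "1 - l"] l r
    by auto
next
  case False
  then show ?thesis
    using concave_onD[OF powr_concave[OF r], of "1 - l" u v] uv l by (simp add: add.commute)
qed

lemma powr_weighted_add_le:
  fixes r A B g h :: real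
  assumes r: "0 < r" "r \<le> 1" and AB: "0 < A" "0 < B" and gh: "0 \<le> g" "0 \<le> h"
  shows "A powr (1 - r) * g powr r + B powr (1 - r) * h powr r \<le> (A + B) powr (1 - r) * (g + h) powr r"
proof -
  have scale: "X * (x / X) powr r = X powr (1 - r) * x powr r" if "0 < X" "0 \<le> x" for X x :: real
    using that by (simp add: powr_divide powr_diff)
  let ?l = "A / (A + B)"
  have l: "1 - ?l = B / (A + B)"
    using AB by (simp add: field_simps)
  have "?l * (g / A) powr r + (1 - ?l) * (h / B) powr r \<le> (?l * (g / A) + (1 - ?l) * (h / B)) powr r"
    using AB gh by (intro powr_concave_combination[OF r]) auto
  also have "?l * (g / A) + (1 - ?l) * (h / B) = (g + h) / (A + B)"
    unfolding l using AB by (simp add: add_divide_distrib)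
  finally have "(A + B) * (?l * (g / A) powr r + (1 - ?l) * (h / B) powr r) \<le> (A + B) * ((g + h) / (A + B)) powr r"
    using AB by (intro mult_left_mono) auto
  then show ?thesis
    unfolding l using AB gh scale[of A g] scale[of B h] scale[of "A + B" "g + h"]
    by (simp add: distrib_left)
qed

lemma powr_midpoint_le:
  fixes s \<alpha> \<beta> :: real
  assumes "1 \<le> s" "0 \<le> \<alpha>" "0 \<le> \<beta>"
  shows "((\<alpha> + \<beta>) / 2) powr s \<le> (\<alpha> powr s + \<beta> powr s) / 2"
proof -
  have r: "0 < 1 / s" "1 / s \<le> 1" using assms(1) by auto
  have "(\<alpha> + \<beta>) / 2 = 1/2 * (\<alpha> powr s) powr (1 / s) + (1 - 1/2) * (\<beta> powr s) powr (1 / s)"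
    using assms by (simp add: powr_powr)
  also have "\<dots> \<le> (1/2 * \<alpha> powr s + (1 - 1/2) * \<beta> powr s) powr (1 / s)"
    by (rule powr_concave_combination[OF r]) auto
  finally have "(\<alpha> + \<beta>) / 2 \<le> ((\<alpha> powr s + \<beta> powr s) / 2) powr (1 / s)"
    by (simp add: add_divide_distrib)
  then have "((\<alpha> + \<beta>) / 2) powr s \<le> (((\<alpha> powr s + \<beta> powr s) / 2) powr (1 / s)) powr s"
    using assms by (intro powr_mono2) auto
  then show ?thesis
    using assms by (simp add: powr_powr)
qed

lemma powr_one_plus_le:
  fixes r x :: real
  assumes "0 \<le> r" "r \<le> 1" "-1 < x"
  shows "(1 + x) powr r \<le> 1 + r * x"
  using Youngs_inequality_0[of r "1 - r" "1 + x" 1] assms by (simp add: algebra_simps)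

lemma two_le_add_if_one_le_mult:
  fixes a b :: real
  assumes "0 < a" "0 < b" "1 \<le> a * b"
  shows "2 \<le> a + b"
proof (rule power2_le_imp_le)
  have "(a + b)\<^sup>2 = (a - b)\<^sup>2 + 4 * (a * b)"
    by (simp add: power2_eq_square algebra_simps)
  then have "4 \<le> (a + b)\<^sup>2"
    using assms(3) zero_le_power2[of "a - b"] by linarith
  then show "2\<^sup>2 \<le> (a + b)\<^sup>2"
    by simp
qed (use assms in simp)

lemma powr_one_plus_minus_powr_one_minus_ge:
  fixes q t :: real
  assumes q: "0 < q" "q \<le> 1" and t: "0 \<le> t" "t \<le> 1"
  shows "2 * q * t \<le> (1 + t) powr q - (1 - t) powr q"
proof -
  let ?f = "\<lambda>x::real. (1 + x) powr q - (1 - x) powr q - 2 * q * x"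
  have "?f 0 \<le> ?f t"
  proof (rule DERIV_nonneg_imp_increasing_open[OF t(1)])
    fix x assume x: "0 < x" "x < t"
    have "0 < (1 + x) * (1 - x)"
      using x t by (intro mult_pos_pos) auto
    moreover have "(1 + x) * (1 - x) \<le> 1"
      by (simp add: algebra_simps)
    ultimately have "((1 + x) * (1 - x)) powr 0 \<le> ((1 + x) * (1 - x)) powr (q - 1)"
      using q by (intro powr_mono') auto
    then have "1 \<le> ((1 + x) * (1 - x)) powr (q - 1)"
      using x t by auto
    then have "2 \<le> (1 + x) powr (q - 1) + (1 - x) powr (q - 1)"
      using x t by (intro two_le_add_if_one_le_mult) (auto simp: powr_mult)
    then have "q * 2 \<le> q * ((1 + x) powr (q - 1) + (1 - x) powr (q - 1))"
      using q by (intro mult_left_mono) auto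
    then have "0 \<le> q * (1 + x) powr (q - 1) + q * (1 - x) powr (q - 1) - 2 * q"
      by (simp add: algebra_simps)
    moreover have "(?f has_real_derivative q * (1 + x) powr (q - 1) + q * (1 - x) powr (q - 1) - 2 * q) (at x)"
      using x t by (auto intro!: derivative_eq_intros)
    ultimately show "\<exists>y. (?f has_real_derivative y) (at x) \<and> 0 \<le> y"
      by blast
  qed (use t q in \<open>intro continuous_intros continuous_on_powr', auto\<close>)
  then show ?thesis by simp
qed

lemma powr_one_plus_plus_powr_one_minus_ge:
  fixes p t :: real
  assumes p: "1 < p" "p \<le> 2" and t: "0 \<le> t" "t \<le> 1"
  shows "2 + p * (p - 1) * t\<^sup>2 \<le> (1 + t) powr p + (1 - t) powr p"
proof -
  let ?f = "\<lambda>x::real. (1 + x) powr p + (1 - x) powr p - 2 - p * (p - 1) * x\<^sup>2"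
  have "?f 0 \<le> ?f t"
  proof (rule DERIV_nonneg_imp_increasing_open[OF t(1)])
    fix x assume x: "0 < x" "x < t"
    have "2 * (p - 1) * x \<le> (1 + x) powr (p - 1) - (1 - x) powr (p - 1)"
      using powr_one_plus_minus_powr_one_minus_ge[of "p - 1" x] p x t by simp
    then have "p * (2 * (p - 1) * x) \<le> p * ((1 + x) powr (p - 1) - (1 - x) powr (p - 1))"
      using p by (intro mult_left_mono) auto
    then have "0 \<le> p * (1 + x) powr (p - 1) - p * (1 - x) powr (p - 1) - p * (p - 1) * (2 * x)"
      by (simp add: algebra_simps)
    moreover have "(?f has_real_derivative
        p * (1 + x) powr (p - 1) - p * (1 - x) powr (p - 1) - p * (p - 1) * (2 * x)) (at x)"
      using x t by (auto intro!: derivative_eq_intros)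
    ultimately show "\<exists>y. (?f has_real_derivative y) (at x) \<and> 0 \<le> y"
      by blast
  qed (use t p in \<open>intro continuous_intros continuous_on_powr', auto\<close>)
  then show ?thesis by simp
qed

lemma two_point_inequality_normalized:
  fixes p s :: real
  assumes p: "1 < p" "p \<le> 2" and s: "\<bar>s\<bar> \<le> 1"
  shows "(1 + (p - 1) * s\<^sup>2) powr (p / 2) \<le> (\<bar>1 + s\<bar> powr p + \<bar>1 - s\<bar> powr p) / 2"
proof -
  define t where "t = \<bar>s\<bar>"
  have t: "0 \<le> t" "t \<le> 1" and st: "s\<^sup>2 = t\<^sup>2"
    using s by (auto simp: t_def)
  have "\<bar>1 + s\<bar> powr p + \<bar>1 - s\<bar> powr p = (1 + t) powr p + (1 - t) powr p"
    using s by (cases "s \<ge> 0") (auto simp: t_def)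
  moreover have "(1 + (p - 1) * t\<^sup>2) powr (p / 2) \<le> 1 + (p / 2) * ((p - 1) * t\<^sup>2)"
    using p by (intro powr_one_plus_le) (auto intro: less_le_trans[of _ 0])
  moreover have "\<dots> \<le> ((1 + t) powr p + (1 - t) powr p) / 2"
    using powr_one_plus_plus_powr_one_minus_ge[OF p t] by (simp add: field_simps)
  ultimately show ?thesis
    by (simp add: st)
qed

lemma power2_powr_half: "((x::real)\<^sup>2) powr (p / 2) = \<bar>x\<bar> powr p"
proof -
  have "x\<^sup>2 = \<bar>x\<bar> powr 2"
    by (cases "x = 0") (simp_all add: powr_numeral)
  then have "(x\<^sup>2) powr (p / 2) = (\<bar>x\<bar> powr 2) powr (p / 2)"
    by (simp only:)
  also have "\<dots> = \<bar>x\<bar> powr (2 * (p / 2))"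
    by (rule powr_powr)
  finally show ?thesis
    by simp
qed

lemma two_point_inequality_dominant:
  fixes p a b :: real
  assumes p: "1 < p" "p \<le> 2" and ab: "\<bar>b\<bar> \<le> \<bar>a\<bar>"
  shows "(a\<^sup>2 + (p - 1) * b\<^sup>2) powr (p / 2) \<le> (\<bar>a + b\<bar> powr p + \<bar>a - b\<bar> powr p) / 2"
proof (cases "a = 0")
  case True
  then show ?thesis using ab by simp
next
  case False
  define s where "s = b / a"
  have s: "\<bar>s\<bar> \<le> 1"
    using ab False by (simp add: s_def abs_divide divide_le_eq_1)
  have b: "b = a * s"
    using False by (simp add: s_def)
  have "(a\<^sup>2 + (p - 1) * b\<^sup>2) powr (p / 2) = (a\<^sup>2) powr (p / 2) * (1 + (p - 1) * s\<^sup>2) powr (p / 2)"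
    using p by (simp add: b power_mult_distrib powr_mult[symmetric] algebra_simps)
  also have "\<dots> = \<bar>a\<bar> powr p * (1 + (p - 1) * s\<^sup>2) powr (p / 2)"
    by (simp add: power2_powr_half)
  also have "\<dots> \<le> \<bar>a\<bar> powr p * ((\<bar>1 + s\<bar> powr p + \<bar>1 - s\<bar> powr p) / 2)"
    using two_point_inequality_normalized[OF p s] by (intro mult_left_mono) auto
  also have "\<dots> = (\<bar>a + b\<bar> powr p + \<bar>a - b\<bar> powr p) / 2"
    by (simp add: b abs_mult[symmetric] powr_mult[symmetric] algebra_simps)
  finally show ?thesis .
qed

lemma two_point_inequality:
  fixes p a b :: real
  assumes p: "1 < p" "p \<le> 2"
  shows "(a\<^sup>2 + (p - 1) * b\<^sup>2) powr (p / 2) \<le> (\<bar>a + b\<bar> powr p + \<bar>a - b\<bar> powr p) / 2"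
proof (cases "\<bar>b\<bar> \<le> \<bar>a\<bar>")
  case True
  then show ?thesis using two_point_inequality_dominant[OF p] by blast
next
  case False
  \<comment> \<open>As \<open>p - 1 \<le> 1\<close>, giving the larger square the weight \<open>1\<close> only increases the left side.\<close>
  then have "(2 - p) * a\<^sup>2 \<le> (2 - p) * b\<^sup>2"
    using p by (intro mult_left_mono) (auto simp: abs_le_square_iff)
  moreover have "0 \<le> a\<^sup>2 + (p - 1) * b\<^sup>2"
    using p by simp
  ultimately have "(a\<^sup>2 + (p - 1) * b\<^sup>2) powr (p / 2) \<le> (b\<^sup>2 + (p - 1) * a\<^sup>2) powr (p / 2)"
    using p by (intro powr_mono2) (auto simp: algebra_simps)
  also have "\<dots> \<le> (\<bar>b + a\<bar> powr p + \<bar>b - a\<bar> powr p) / 2"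
    using two_point_inequality_dominant[OF p, of a b] False by simp
  finally show ?thesis
    by (simp add: abs_minus_commute add.commute)
qed

section \<open>Uniform smoothness of \<open>L\<^sub>p\<close>\<close>

lemma abs_add_powr_le:
  fixes u v p :: real
  assumes "0 \<le> p"
  shows "\<bar>u + v\<bar> powr p \<le> 2 powr p * (\<bar>u\<bar> powr p + \<bar>v\<bar> powr p)"
proof -
  define m where "m = max \<bar>u\<bar> \<bar>v\<bar>"
  have "\<bar>u + v\<bar> powr p \<le> (2 * m) powr p"
    using assms by (intro powr_mono2) (auto simp: m_def)
  also have "\<dots> = 2 powr p * m powr p"
    by (simp add: powr_mult m_def)
  also have "m powr p \<le> \<bar>u\<bar> powr p + \<bar>v\<bar> powr p"
    by (simp add: m_def max_def)
  finally show ?thesis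
    by simp
qed

lemma in_Lp_add:
  assumes p: "0 \<le> p" and g: "in_Lp M p g" and h: "in_Lp M p h"
  shows "in_Lp M p (\<lambda>z. g z + h z)"
  unfolding in_Lp_def
proof
  show meas: "(\<lambda>z. g z + h z) \<in> borel_measurable M"
    using g h by (auto simp: in_Lp_def)
  show "integrable M (\<lambda>z. \<bar>g z + h z\<bar> powr p)"
  proof (rule Bochner_Integration.integrable_bound)
    show "integrable M (\<lambda>z. 2 powr p * (\<bar>g z\<bar> powr p + \<bar>h z\<bar> powr p))"
      using g h by (auto simp: in_Lp_def)
    show "(\<lambda>z. \<bar>g z + h z\<bar> powr p) \<in> borel_measurable M"
      using meas by measurable
    show "AE z in M. norm (\<bar>g z + h z\<bar> powr p) \<le> norm (2 powr p * (\<bar>g z\<bar> powr p + \<bar>h z\<bar> powr p))"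
      using abs_add_powr_le[OF p] by auto
  qed
qed

lemma in_Lp_cmult:
  assumes "in_Lp M p g"
  shows "in_Lp M p (\<lambda>z. c * g z)"
  using assms by (auto simp: in_Lp_def abs_mult powr_mult)

lemma in_Lp_diff:
  assumes "0 \<le> p" "in_Lp M p g" "in_Lp M p h"
  shows "in_Lp M p (\<lambda>z. g z - h z)"
  using in_Lp_add[OF assms(1,2) in_Lp_cmult[OF assms(3), of "-1"]] by simp

lemma Lp_norm_power2: "(Lp_norm M p g)\<^sup>2 = (\<integral>x. \<bar>g x\<bar> powr p \<partial>M) powr (2 / p)"
proof -
  have "0 \<le> (\<integral>x. \<bar>g x\<bar> powr p \<partial>M)"
    by (rule integral_nonneg_AE) auto
  then show ?thesis
    by (simp add: Lp_norm_def powr_powr flip: powr_numeral)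
qed

lemma Lp_norm_cmult:
  assumes "0 < p"
  shows "Lp_norm M p (\<lambda>z. c * g z) = \<bar>c\<bar> * Lp_norm M p g"
proof -
  have "0 \<le> (\<integral>x. \<bar>g x\<bar> powr p \<partial>M)"
    by (rule integral_nonneg_AE) auto
  moreover have "(\<integral>x. \<bar>c * g x\<bar> powr p \<partial>M) = \<bar>c\<bar> powr p * (\<integral>x. \<bar>g x\<bar> powr p \<partial>M)"
    by (simp add: abs_mult powr_mult)
  ultimately show ?thesis
    using assms by (simp add: Lp_norm_def powr_mult powr_powr)
qed

lemma reverse_Minkowski:
  fixes G H :: "'a \<Rightarrow> real" and r :: real
  assumes r: "0 < r" "r \<le> 1"
    and nonneg: "\<And>x. 0 \<le> G x" "\<And>x. 0 \<le> H x"
    and int_G: "integrable M (\<lambda>x. G x powr r)" and int_H: "integrable M (\<lambda>x. H x powr r)"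
    and int_GH: "integrable M (\<lambda>x. (G x + H x) powr r)"
  shows "(\<integral>x. G x powr r \<partial>M) powr (1 / r) + (\<integral>x. H x powr r \<partial>M) powr (1 / r)
         \<le> (\<integral>x. (G x + H x) powr r \<partial>M) powr (1 / r)"
proof -
  define a where "a = (\<integral>x. G x powr r \<partial>M)"
  define b where "b = (\<integral>x. H x powr r \<partial>M)"
  define c where "c = (\<integral>x. (G x + H x) powr r \<partial>M)"
  have "0 \<le> a" "0 \<le> b"
    unfolding a_def b_def by (auto intro: integral_nonneg_AE)
  have "a \<le> c" "b \<le> c"
    unfolding a_def b_def c_def using nonneg r
    by (auto intro!: integral_mono int_G int_H int_GH powr_mono2)
  show ?thesis
  proof (cases "a = 0 \<or> b = 0")
    case True
    then show ?thesis
      using \<open>0 \<le> a\<close> \<open>0 \<le> b\<close> \<open>a \<le> c\<close> \<open>b \<le> c\<close> r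
      by (auto simp flip: a_def b_def c_def intro!: powr_mono2)
  next
    case False
    define A where "A = a powr (1 / r)"
    define B where "B = b powr (1 / r)"
    have "0 < A" "0 < B" "A powr r = a" "B powr r = b"
      using False \<open>0 \<le> a\<close> \<open>0 \<le> b\<close> r by (auto simp: A_def B_def powr_powr)
    have "A + B = A powr (1 - r) * a + B powr (1 - r) * b"
      using \<open>0 < A\<close> \<open>0 < B\<close> by (simp flip: \<open>A powr r = a\<close> \<open>B powr r = b\<close> powr_add)
    also have "\<dots> = (\<integral>x. A powr (1 - r) * G x powr r + B powr (1 - r) * H x powr r \<partial>M)"
      using int_G int_H by (simp add: a_def b_def)
    also have "\<dots> \<le> (\<integral>x. (A + B) powr (1 - r) * (G x + H x) powr r \<partial>M)"
      using int_G int_H int_GH nonneg \<open>0 < A\<close> \<open>0 < B\<close>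
      by (intro integral_mono powr_weighted_add_le[OF r]) auto
    also have "\<dots> = (A + B) powr (1 - r) * c"
      by (simp add: c_def)
    finally have "(A + B) powr (1 - r) * (A + B) powr r \<le> (A + B) powr (1 - r) * c"
      using \<open>0 < A\<close> \<open>0 < B\<close> by (simp flip: powr_add)
    then have "(A + B) powr r \<le> c"
      using \<open>0 < A\<close> \<open>0 < B\<close> by simp
    then have "((A + B) powr r) powr (1 / r) \<le> c powr (1 / r)"
      using \<open>0 < A\<close> \<open>0 < B\<close> r by (intro powr_mono2) auto
    then show ?thesis
      using \<open>0 < A\<close> \<open>0 < B\<close> r by (simp add: powr_powr A_def B_def a_def b_def c_def)
  qed
qed
lemma integrable_sum_squares_powr:
  assumes "0 \<le> p" "0 \<le> c" and X: "in_Lp M p X" and Y: "in_Lp M p Y"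
  shows "integrable M (\<lambda>z. ((X z)\<^sup>2 + c * (Y z)\<^sup>2) powr (p / 2))"
proof (rule Bochner_Integration.integrable_bound)
  show "integrable M (\<lambda>z. 2 powr (p / 2) * (\<bar>X z\<bar> powr p + c powr (p / 2) * \<bar>Y z\<bar> powr p))"
    using X Y by (auto simp: in_Lp_def)
  have "X \<in> borel_measurable M" "Y \<in> borel_measurable M"
    using X Y by (auto simp: in_Lp_def)
  then show "(\<lambda>z. ((X z)\<^sup>2 + c * (Y z)\<^sup>2) powr (p / 2)) \<in> borel_measurable M"
    by measurable
  have "((X z)\<^sup>2 + c * (Y z)\<^sup>2) powr (p / 2) \<le> 2 powr (p / 2) * (\<bar>X z\<bar> powr p + c powr (p / 2) * \<bar>Y z\<bar> powr p)" for z
    using abs_add_powr_le[of "p / 2" "(X z)\<^sup>2" "c * (Y z)\<^sup>2"] assms(1,2)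
    by (simp add: abs_mult power2_powr_half powr_mult)
  then show "AE z in M. norm (((X z)\<^sup>2 + c * (Y z)\<^sup>2) powr (p / 2))
      \<le> norm (2 powr (p / 2) * (\<bar>X z\<bar> powr p + c powr (p / 2) * \<bar>Y z\<bar> powr p))"
    by (auto intro!: AE_I2)
qed

lemma reverse_Minkowski_sum_squares:
  assumes p: "0 < p" "p \<le> 2" and c: "0 \<le> c" and X: "in_Lp M p X" and Y: "in_Lp M p Y"
  shows "(Lp_norm M p X)\<^sup>2 + c * (Lp_norm M p Y)\<^sup>2
         \<le> (\<integral>z. ((X z)\<^sup>2 + c * (Y z)\<^sup>2) powr (p / 2) \<partial>M) powr (2 / p)"
proof -
  define G where "G z = (X z)\<^sup>2" for z
  define H where "H z = c * (Y z)\<^sup>2" for z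
  have G_powr: "G z powr (p / 2) = \<bar>X z\<bar> powr p" for z
    by (simp add: G_def power2_powr_half)
  have H_powr: "H z powr (p / 2) = c powr (p / 2) * \<bar>Y z\<bar> powr p" for z
    using c by (simp add: H_def power2_powr_half powr_mult)
  have "0 \<le> (\<integral>z. \<bar>Y z\<bar> powr p \<partial>M)"
    by (rule integral_nonneg_AE) auto
  then have "(Lp_norm M p X)\<^sup>2 + c * (Lp_norm M p Y)\<^sup>2
      = (\<integral>z. G z powr (p / 2) \<partial>M) powr (1 / (p / 2)) + (\<integral>z. H z powr (p / 2) \<partial>M) powr (1 / (p / 2))"
    using p c by (simp add: Lp_norm_power2 G_powr H_powr powr_mult powr_powr)
  also have "\<dots> \<le> (\<integral>z. (G z + H z) powr (p / 2) \<partial>M) powr (1 / (p / 2))"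
  proof (rule reverse_Minkowski)
    show "integrable M (\<lambda>z. G z powr (p / 2))" "integrable M (\<lambda>z. H z powr (p / 2))"
      using X Y by (simp_all add: G_powr H_powr in_Lp_def)
    show "integrable M (\<lambda>z. (G z + H z) powr (p / 2))"
      unfolding G_def H_def using p c X Y by (intro integrable_sum_squares_powr) auto
  qed (use p c in \<open>auto simp: G_def H_def\<close>)
  finally show ?thesis
    by (simp add: G_def H_def)
qed

lemma Lp_norm_power2_parallelogram:
  assumes p: "1 < p" "p \<le> 2" and X: "in_Lp M p X" and Y: "in_Lp M p Y"
  shows "(Lp_norm M p X)\<^sup>2 + (p - 1) * (Lp_norm M p Y)\<^sup>2
         \<le> ((Lp_norm M p (\<lambda>z. X z + Y z))\<^sup>2 + (Lp_norm M p (\<lambda>z. X z - Y z))\<^sup>2) / 2"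
proof -
  let ?I = "\<lambda>g. \<integral>z. \<bar>g z\<bar> powr p \<partial>M"
  have XY: "in_Lp M p (\<lambda>z. X z + Y z)" "in_Lp M p (\<lambda>z. X z - Y z)"
    using p X Y by (auto intro: in_Lp_add in_Lp_diff)
  have "(Lp_norm M p X)\<^sup>2 + (p - 1) * (Lp_norm M p Y)\<^sup>2
      \<le> (\<integral>z. ((X z)\<^sup>2 + (p - 1) * (Y z)\<^sup>2) powr (p / 2) \<partial>M) powr (2 / p)"
    using p X Y by (intro reverse_Minkowski_sum_squares) auto
  also have "\<dots> \<le> ((?I (\<lambda>z. X z + Y z) + ?I (\<lambda>z. X z - Y z)) / 2) powr (2 / p)"
  proof (rule powr_mono2)
    show "0 \<le> (\<integral>z. ((X z)\<^sup>2 + (p - 1) * (Y z)\<^sup>2) powr (p / 2) \<partial>M)"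
      by (rule integral_nonneg_AE) auto
    have "(\<integral>z. ((X z)\<^sup>2 + (p - 1) * (Y z)\<^sup>2) powr (p / 2) \<partial>M)
        \<le> (\<integral>z. (\<bar>X z + Y z\<bar> powr p + \<bar>X z - Y z\<bar> powr p) / 2 \<partial>M)"
      using p X Y XY two_point_inequality[OF p]
      by (intro integral_mono integrable_sum_squares_powr) (auto simp: in_Lp_def)
    then show "(\<integral>z. ((X z)\<^sup>2 + (p - 1) * (Y z)\<^sup>2) powr (p / 2) \<partial>M)
        \<le> (?I (\<lambda>z. X z + Y z) + ?I (\<lambda>z. X z - Y z)) / 2"
      using XY by (simp add: in_Lp_def)
  qed (use p in simp)
  also have "\<dots> \<le> (?I (\<lambda>z. X z + Y z) powr (2 / p) + ?I (\<lambda>z. X z - Y z) powr (2 / p)) / 2"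
    using p by (intro powr_midpoint_le integral_nonneg_AE) auto
  finally show ?thesis
    by (simp add: Lp_norm_power2)
qed

lemma Lp_norm_power2_add_le:
  assumes p: "1 < p" "p \<le> 2" and g: "in_Lp M p g" and h: "in_Lp M p h"
  shows "(Lp_norm M p (\<lambda>z. g z + h z))\<^sup>2 \<le> 2 * ((Lp_norm M p g)\<^sup>2 + (Lp_norm M p h)\<^sup>2)"
proof -
  have "(Lp_norm M p (\<lambda>z. g z + h z))\<^sup>2 + (p - 1) * (Lp_norm M p (\<lambda>z. g z - h z))\<^sup>2
      \<le> ((Lp_norm M p (\<lambda>z. 2 * g z))\<^sup>2 + (Lp_norm M p (\<lambda>z. 2 * h z))\<^sup>2) / 2"
    using Lp_norm_power2_parallelogram[OF p in_Lp_add[OF _ g h] in_Lp_diff[OF _ g h]] p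
    by (simp add: algebra_simps)
  moreover have "(Lp_norm M p (\<lambda>z. 2 * g z))\<^sup>2 = 4 * (Lp_norm M p g)\<^sup>2"
    "(Lp_norm M p (\<lambda>z. 2 * h z))\<^sup>2 = 4 * (Lp_norm M p h)\<^sup>2"
    using p by (simp_all add: Lp_norm_cmult power_mult_distrib)
  moreover have "0 \<le> (p - 1) * (Lp_norm M p (\<lambda>z. g z - h z))\<^sup>2"
    using p by simp
  ultimately show ?thesis
    by argo
qed

lemma Lp_quadrilateral_inequality:
  assumes p: "1 < p" "p \<le> 2"
    and u: "in_Lp M p u" and v: "in_Lp M p v" and a: "in_Lp M p a" and b: "in_Lp M p b"
  shows "(Lp_norm M p (\<lambda>z. u z - v z))\<^sup>2 + (p - 1) * (Lp_norm M p (\<lambda>z. a z - b z))\<^sup>2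
    \<le> (Lp_norm M p (\<lambda>z. u z - a z))\<^sup>2 + (Lp_norm M p (\<lambda>z. a z - v z))\<^sup>2
      + (Lp_norm M p (\<lambda>z. u z - b z))\<^sup>2 + (Lp_norm M p (\<lambda>z. b z - v z))\<^sup>2"
proof -
  have p0: "0 \<le> p"
    using p by simp
  note diff = in_Lp_diff[OF p0]
  have regroup: "(\<lambda>z. (u z - v z) + (a z - b z)) = (\<lambda>z. (u z - b z) + (a z - v z))"
    "(\<lambda>z. (u z - v z) - (a z - b z)) = (\<lambda>z. (u z - a z) + (b z - v z))"
    by (simp_all add: fun_eq_iff)
  show ?thesis
    using Lp_norm_power2_parallelogram[OF p diff[OF u v] diff[OF a b]]
      Lp_norm_power2_add_le[OF p diff[OF u b] diff[OF a v]]
      Lp_norm_power2_add_le[OF p diff[OF u a] diff[OF b v]]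
    unfolding regroup by argo
qed

section \<open>Diamond graphs\<close>

definition diamond_quadrilateral :: "dvert \<Rightarrow> dvert \<Rightarrow> (dvert \<times> dvert) set" where
  "diamond_quadrilateral u v =
     {(u, Mid True u v), (Mid True u v, v), (u, Mid False u v), (Mid False u v, v)}"

lemma diamond_edges_Suc_eq:
  "diamond_edges (Suc i) = (\<Union>(u, v) \<in> diamond_edges i. diamond_quadrilateral u v)"
  by (simp add: diamond_quadrilateral_def)

lemma finite_diamond_edges: "finite (diamond_edges k)"
  by (induction k) auto

lemma Mid_ne_nested [simp]:
  "u \<noteq> Mid b w (Mid c u v)" "v \<noteq> Mid b (Mid c u v) w"
  by (auto dest: arg_cong[of _ _ size])

lemma diamond_quadrilaterals_disjoint:
  "(u, v) \<noteq> (u', v') \<Longrightarrow> diamond_quadrilateral u v \<inter> diamond_quadrilateral u' v' = {}"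
  by (auto simp: diamond_quadrilateral_def)

lemma sum_diamond_quadrilateral:
  "(\<Sum>(x, y) \<in> diamond_quadrilateral u v. g x y)
     = g u (Mid True u v) + g (Mid True u v) v + g u (Mid False u v) + g (Mid False u v) v"
  by (simp add: diamond_quadrilateral_def add.assoc)

lemma sum_diamond_edges_Suc:
  "(\<Sum>(x, y) \<in> diamond_edges (Suc i). g x y)
     = (\<Sum>(u, v) \<in> diamond_edges i.
          g u (Mid True u v) + g (Mid True u v) v + g u (Mid False u v) + g (Mid False u v) v)"
proof -
  have "(\<Sum>(x, y) \<in> diamond_edges (Suc i). g x y)
      = (\<Sum>e \<in> diamond_edges i. \<Sum>(x, y) \<in> (case e of (u, v) \<Rightarrow> diamond_quadrilateral u v). g x y)"
    unfolding diamond_edges_Suc_eq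
  proof (rule sum.UNION_disjoint[OF finite_diamond_edges])
    show "\<forall>e \<in> diamond_edges i. finite (case e of (u, v) \<Rightarrow> diamond_quadrilateral u v)"
      by (auto simp: diamond_quadrilateral_def)
    show "\<forall>e \<in> diamond_edges i. \<forall>e' \<in> diamond_edges i. e \<noteq> e' \<longrightarrow>
        (case e of (u, v) \<Rightarrow> diamond_quadrilateral u v) \<inter> (case e' of (u, v) \<Rightarrow> diamond_quadrilateral u v) = {}"
      using diamond_quadrilaterals_disjoint by fastforce
  qed
  also have "\<dots> = (\<Sum>(u, v) \<in> diamond_edges i.
          g u (Mid True u v) + g (Mid True u v) v + g u (Mid False u v) + g (Mid False u v) v)"
    by (intro sum.cong refl) (clarsimp simp: sum_diamond_quadrilateral)
  finally show ?thesis .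
qed

lemma sum_anti_edges_Suc:
  "(\<Sum>(x, y) \<in> anti_edges (Suc i). g x y) = (\<Sum>(u, v) \<in> diamond_edges i. g (Mid True u v) (Mid False u v))"
proof -
  have inj: "inj_on (\<lambda>(u, v). (Mid True u v, Mid False u v)) (diamond_edges i)"
    by (auto simp: inj_on_def)
  have anti: "anti_edges (Suc i) = (\<lambda>(u, v). (Mid True u v, Mid False u v)) ` diamond_edges i"
    by (simp add: anti_edges_def)
  show ?thesis
    unfolding anti sum.reindex[OF inj] by (simp add: comp_def case_prod_beta)
qed

lemma diamond_vertices_Suc:
  "(u, v) \<in> diamond_edges i \<Longrightarrow> {u, v, Mid b u v} \<subseteq> diamond_vertices (Suc i)"
  unfolding diamond_vertices_def by (force simp: image_iff)

lemma diamond_vertices_mono: "j \<le> k \<Longrightarrow> diamond_vertices j \<subseteq> diamond_vertices k"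
proof (rule lift_Suc_mono_le)
  show "diamond_vertices i \<subseteq> diamond_vertices (Suc i)" for i
  proof
    fix x assume "x \<in> diamond_vertices i"
    then obtain u v where "(u, v) \<in> diamond_edges i" "x = u \<or> x = v"
      unfolding diamond_vertices_def by force
    then show "x \<in> diamond_vertices (Suc i)"
      using diamond_vertices_Suc by blast
  qed
qed

lemma diamond_edge_sum_ge:
  fixes Q :: "dvert \<Rightarrow> dvert \<Rightarrow> real" and c :: real
  assumes quadrilateral: "\<And>j u v. j < k \<Longrightarrow> (u, v) \<in> diamond_edges j \<Longrightarrow>
      Q u v + c * Q (Mid True u v) (Mid False u v)
        \<le> Q u (Mid True u v) + Q (Mid True u v) v + Q u (Mid False u v) + Q (Mid False u v) v"
  shows "Q S T + c * (\<Sum>i = 1..k. \<Sum>(x, y) \<in> anti_edges i. Q x y) \<le> (\<Sum>(x, y) \<in> diamond_edges k. Q x y)"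
  using quadrilateral
proof (induction k)
  case 0
  then show ?case by simp
next
  case (Suc k)
  have IH: "Q S T + c * (\<Sum>i = 1..k. \<Sum>(x, y) \<in> anti_edges i. Q x y) \<le> (\<Sum>(x, y) \<in> diamond_edges k. Q x y)"
    by (rule Suc.IH) (rule Suc.prems; simp)
  have "Q S T + c * (\<Sum>i = 1..Suc k. \<Sum>(x, y) \<in> anti_edges i. Q x y)
      = (Q S T + c * (\<Sum>i = 1..k. \<Sum>(x, y) \<in> anti_edges i. Q x y))
        + c * (\<Sum>(x, y) \<in> anti_edges (Suc k). Q x y)"
    by (simp add: algebra_simps)
  also have "\<dots> \<le> (\<Sum>(x, y) \<in> diamond_edges k. Q x y) + c * (\<Sum>(x, y) \<in> anti_edges (Suc k). Q x y)"
    using IH by simp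
  also have "\<dots> = (\<Sum>(u, v) \<in> diamond_edges k. Q u v + c * Q (Mid True u v) (Mid False u v))"
    unfolding sum_anti_edges_Suc by (simp add: sum.distrib sum_distrib_left case_prod_beta)
  also have "\<dots> \<le> (\<Sum>(u, v) \<in> diamond_edges k.
      Q u (Mid True u v) + Q (Mid True u v) v + Q u (Mid False u v) + Q (Mid False u v) v)"
    using Suc.prems by (intro sum_mono) auto
  also have "\<dots> = (\<Sum>(x, y) \<in> diamond_edges (Suc k). Q x y)"
    by (rule sum_diamond_edges_Suc[symmetric])
  finally show ?case .
qed

theorem lemma2p2:
  fixes M :: "'m measure" and p :: real and k :: nat and f :: "dvert \<Rightarrow> 'm \<Rightarrow> real"
  assumes "1 < p" and "p \<le> 2"
    and "\<And>v. v \<in> diamond_vertices k \<Longrightarrow> in_Lp M p (f v)"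
  shows "(Lp_norm M p (\<lambda>x. f S x - f T x))\<^sup>2
           + (p - 1) * (\<Sum>i = 1..k. \<Sum>(x, y) \<in> anti_edges i. (Lp_norm M p (\<lambda>z. f x z - f y z))\<^sup>2)
         \<le> (\<Sum>(x, y) \<in> diamond_edges k. (Lp_norm M p (\<lambda>z. f x z - f y z))\<^sup>2)"
proof (rule diamond_edge_sum_ge[where Q = "\<lambda>x y. (Lp_norm M p (\<lambda>z. f x z - f y z))\<^sup>2" and c = "p - 1"])
  fix j u v
  assume j: "j < k" and uv: "(u, v) \<in> diamond_edges j"
  have "in_Lp M p (f w)" if "w \<in> {u, v, Mid b u v}" for w b
  proof (rule assms(3))
    have "diamond_vertices (Suc j) \<subseteq> diamond_vertices k"
      using j by (intro diamond_vertices_mono) simp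
    then show "w \<in> diamond_vertices k"
      using diamond_vertices_Suc[OF uv, of b] that by blast
  qed
  then show "(Lp_norm M p (\<lambda>z. f u z - f v z))\<^sup>2
      + (p - 1) * (Lp_norm M p (\<lambda>z. f (Mid True u v) z - f (Mid False u v) z))\<^sup>2
    \<le> (Lp_norm M p (\<lambda>z. f u z - f (Mid True u v) z))\<^sup>2
      + (Lp_norm M p (\<lambda>z. f (Mid True u v) z - f v z))\<^sup>2
      + (Lp_norm M p (\<lambda>z. f u z - f (Mid False u v) z))\<^sup>2
      + (Lp_norm M p (\<lambda>z. f (Mid False u v) z - f v z))\<^sup>2"
    by (intro Lp_quadrilateral_inequality[OF assms(1,2)]) auto
qed

end
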